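(* Assume the standing hypotheses, with $q>4$ the moment exponent of $\theta$, and let $\varepsilon>0$. Under $\mathbf P^{(\mathcal T_\infty)}$, and also under $\mathbf P^{(\mathcal T^*_\infty)}$, the probability of the event $$\max_{0\le i\le n}\ \mathrm d\big(V(\varnothing_i),\{V(u):u\in U_n\}\big)\le n^{\frac1q+\varepsilon}$$ tends to $1$ as $n\to\infty$, where $U_n$ is the set of non-spine vertices belonging to the subtrees hanging off $\varnothing_0,\dots,\varnothing_n$ (i.e. non-spine vertices which are descendants of some $\varnothing_j$, $j\le n$, but not of $\varnothing_{n+1}$).
   Context: Standing hypotheses: $\theta$ symmetric probability on $\mathbb Z^d$, not supported by a strict subgroup, $\mathbb E|X|^q<\infty$ for some fixed $q>4$; $(p_i)$ offspring distribution with $\sum ip_i=1$, $\sigma_p^2=\sum i^2p_i-1\in(0,\infty)$; $\mathcal T$ the Galton–Watson tree with offspring $(p_i)$. $\mathcal T_\infty$: spine $\varnothing_0,\varnothing_1,\dots$ where independently each $\varnothing_k$ has $K_k$ additional children, $\mathbb P(K_k=j)=\sum_{i\ge j+1}p_i$, each the root of an independent copy of $\mathcal T$, and $\varnothing_{k+1}$ is the last child of $\varnothing_k$. $\mathcal T^*_\infty$: same, except that $\varnothing_0$ is the root of an independent copy of $\mathcal T$ (with $\varnothing_1$ appended as last child). $V$ is the BRW with i.i.d. $\theta$ increments on all edges, $V(\varnothing_0)=0$; $\mathrm d$ is Euclidean distance to a set. *)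

theory Defs
  imports "HOL-Probability.Probability"
begin

text \<open>Index type: Inl k refers to spine vertex k (its number of extra children K_k,
and the increment of the spine edge from k to k+1);
Inr (k,j,w) refers to the vertex with Ulam--Harris word w in the
Galton--Watson subtree rooted at the j-th extra child of spine vertex k
(its offspring number, and the increment on the edge from its parent).\<close>

type_synonym idx = "nat + (nat \<times> nat \<times> nat list)"

definition offspring_law :: "nat pmf \<Rightarrow> nat pmf \<Rightarrow> nat pmf \<Rightarrow> idx \<Rightarrow> nat pmf" where
  "offspring_law L0 Kl p i = (case i of Inl k \<Rightarrow> (if k = 0 then L0 else Kl) | Inr _ \<Rightarrow> p)"

text \<open>The probability space: all offspring numbers and all increments independent.
L0 is the law of K_0 (Kl for T_infinity, p for T*_infinity).\<close>
definition brw_space :: "nat pmf \<Rightarrow> nat pmf \<Rightarrow> nat pmf \<Rightarrow> (int ^ 'd) pmf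
    \<Rightarrow> ((idx \<Rightarrow> nat) \<times> (idx \<Rightarrow> int ^ 'd)) measure" where
  "brw_space L0 Kl p \<theta> =
     (PiM UNIV (\<lambda>i. measure_pmf (offspring_law L0 Kl p i))) \<Otimes>\<^sub>M (PiM UNIV (\<lambda>i. measure_pmf \<theta>))"

definition spine_pos :: "(idx \<Rightarrow> int ^ 'd) \<Rightarrow> nat \<Rightarrow> int ^ 'd" where
  "spine_pos Y i = (\<Sum>k<i. Y (Inl k))"

definition in_subtree :: "(idx \<Rightarrow> nat) \<Rightarrow> nat \<Rightarrow> nat \<Rightarrow> nat list \<Rightarrow> bool" where
  "in_subtree N k j w \<longleftrightarrow> j < N (Inl k) \<and> (\<forall>m<length w. w ! m < N (Inr (k, j, take m w)))"

definition node_pos :: "(idx \<Rightarrow> int ^ 'd) \<Rightarrow> nat \<Rightarrow> nat \<Rightarrow> nat list \<Rightarrow> int ^ 'd" where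
  "node_pos Y k j w = spine_pos Y k + (\<Sum>m\<le>length w. Y (Inr (k, j, take m w)))"

definition U_pos :: "(idx \<Rightarrow> nat) \<times> (idx \<Rightarrow> int ^ 'd) \<Rightarrow> nat \<Rightarrow> (int ^ 'd) set" where
  "U_pos \<omega> n = {node_pos (snd \<omega>) k j w | k j w. k \<le> n \<and> in_subtree (fst \<omega>) k j w}"

definition zvec :: "int ^ 'd \<Rightarrow> real ^ 'd" where
  "zvec x = (\<chi> i. real_of_int (x $ i))"

text \<open>The event; distance to the empty set is +infinity, so nonemptiness is required.\<close>
definition good_event :: "nat \<Rightarrow> real \<Rightarrow> real \<Rightarrow> ((idx \<Rightarrow> nat) \<times> (idx \<Rightarrow> int ^ 'd)) set" where
  "good_event n \<epsilon> q = {\<omega>. U_pos \<omega> n \<noteq> {} \<and>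
      (\<forall>i\<le>n. infdist (zvec (spine_pos (snd \<omega>) i)) (zvec ` U_pos \<omega> n) \<le> real n powr (1 / q + \<epsilon>))}"

end

theory Submission
  imports Defs "HOL-Real_Asymp.Real_Asymp"
begin

text \<open>Every spine vertex with an extra child lies within one increment of that child, which belongs
  to \<open>U\<^sub>n\<close>. Among any \<open>n\<^sup>\<delta>\<close> consecutive spine vertices one has an extra child, except with
  probability \<open>b\<^bsup>n\<^sup>\<delta> - 1\<^esup>\<close> where \<open>b = P(K = 0) < 1\<close>; and by Markov's inequality for the
  \<open>q\<close>-th moment the \<open>O(n)\<close> increments along the spine and to these first children all stay below
  \<open>n\<^bsup>1/q + \<delta>\<^esup>\<close>, except with probability \<open>O(n\<^bsup>-\<delta>q\<^esup>)\<close>. Outside these events every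
  \<open>V(\<emptyset>\<^sub>i)\<close>, \<open>i \<le> n\<close>, is within \<open>(n\<^sup>\<delta> + 1) n\<^bsup>1/q + \<delta>\<^esup> \<le> n\<^bsup>1/q + \<epsilon>\<^esup>\<close> of \<open>U\<^sub>n\<close>.\<close>

lemma prod_emb_pmf_eq_cylinder:
  "prod_emb UNIV (\<lambda>i. measure_pmf (P i)) J (PiE J A) = {x. \<forall>j\<in>J. x j \<in> A j}"
  by (auto simp: prod_emb_def space_PiM PiE_UNIV_domain)

lemma sets_PiM_pmf_cylinder:
  "finite J \<Longrightarrow> {x. \<forall>j\<in>J. x j \<in> A j} \<in> sets (PiM UNIV (\<lambda>i. measure_pmf (P i)))"
  using sets_PiM_I[of J UNIV A "\<lambda>i. measure_pmf (P i)"] by (simp add: prod_emb_pmf_eq_cylinder)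

lemma measure_PiM_pmf_cylinder:
  fixes P :: "'i \<Rightarrow> 'a pmf"
  assumes "finite J"
  shows "measure (PiM UNIV (\<lambda>i. measure_pmf (P i))) {x. \<forall>j\<in>J. x j \<in> A j}
       = (\<Prod>j\<in>J. measure_pmf.prob (P j) (A j))"
proof -
  have "product_prob_space (\<lambda>i. measure_pmf (P i))"
    by (simp add: product_prob_space_def product_prob_space_axioms_def product_sigma_finite_def
        prob_space_measure_pmf prob_space_imp_sigma_finite)
  then show ?thesis
    using product_prob_space.measure_PiM_emb[where M="\<lambda>i. measure_pmf (P i)" and I=UNIV and J=J and X=A]
      assms
    by (simp add: prod_emb_pmf_eq_cylinder)
qed

lemma measure_pair_measure_Times_prob:
  assumes "prob_space M1" "prob_space M2" "A \<in> sets M1" "B \<in> sets M2"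
  shows "measure (M1 \<Otimes>\<^sub>M M2) (A \<times> B) = measure M1 A * measure M2 B"
proof -
  interpret M1: prob_space M1 by fact
  interpret M2: prob_space M2 by fact
  show ?thesis
    using M2.emeasure_pair_measure_Times[OF assms(3,4)] by (simp add: measure_def enn2real_mult)
qed

lemma space_brw_space [simp]: "space (brw_space L0 Kl p \<theta>) = UNIV"
  by (simp add: brw_space_def space_pair_measure space_PiM PiE_UNIV_domain)

lemma prob_space_brw_space: "prob_space (brw_space L0 Kl p \<theta>)"
  unfolding brw_space_def
  by (intro prob_space_pair prob_space_PiM) (auto intro: prob_space_measure_pmf)

lemma measurable_offspring [measurable]:
  "(\<lambda>\<omega>. fst \<omega> i) \<in> measurable (brw_space L0 Kl p \<theta>) (count_space UNIV)"
proof -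
  have "(\<lambda>x. x i) \<in> measurable (PiM UNIV (\<lambda>i. measure_pmf (offspring_law L0 Kl p i))) (count_space UNIV)"
    using measurable_component_singleton[of i UNIV "\<lambda>i. measure_pmf (offspring_law L0 Kl p i)"] by simp
  then show ?thesis unfolding brw_space_def by measurable
qed

lemma measurable_increment [measurable]:
  "(\<lambda>\<omega>. snd \<omega> i) \<in> measurable (brw_space L0 Kl p \<theta>) (count_space UNIV)"
proof -
  have "(\<lambda>x. x i) \<in> measurable (PiM UNIV (\<lambda>i. measure_pmf \<theta>)) (count_space UNIV)"
    using measurable_component_singleton[of i UNIV "\<lambda>i. measure_pmf \<theta>"] by simp
  then show ?thesis unfolding brw_space_def by measurable
qed

lemma measure_brw_space_offspring:
  assumes "finite J"
  shows "measure (brw_space L0 Kl p \<theta>) {\<omega>. \<forall>j\<in>J. fst \<omega> j \<in> A j}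
       = (\<Prod>j\<in>J. measure_pmf.prob (offspring_law L0 Kl p j) (A j))"
proof -
  let ?M1 = "PiM UNIV (\<lambda>i. measure_pmf (offspring_law L0 Kl p i))"
  let ?M2 = "PiM UNIV (\<lambda>i::idx. measure_pmf \<theta>)"
  have "{\<omega>. \<forall>j\<in>J. fst \<omega> j \<in> A j} = {x. \<forall>j\<in>J. x j \<in> A j} \<times> space ?M2"
    by (auto simp: space_PiM PiE_UNIV_domain)
  moreover have "{x. \<forall>j\<in>J. x j \<in> A j} \<in> sets ?M1"
    using assms by (rule sets_PiM_pmf_cylinder)
  ultimately show ?thesis
    unfolding brw_space_def
    by (simp add: measure_pair_measure_Times_prob prob_space_PiM prob_space_measure_pmf
        prob_space.prob_space measure_PiM_pmf_cylinder assms)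
qed

lemma measure_brw_space_increment:
  "measure (brw_space L0 Kl p \<theta>) {\<omega>. snd \<omega> a \<in> B} = measure_pmf.prob \<theta> B"
proof -
  let ?M1 = "PiM UNIV (\<lambda>i. measure_pmf (offspring_law L0 Kl p i))"
  let ?M2 = "PiM UNIV (\<lambda>i::idx. measure_pmf \<theta>)"
  let ?B = "{y. \<forall>j\<in>{a}. y j \<in> B}"
  have "{\<omega>. snd \<omega> a \<in> B} = space ?M1 \<times> ?B"
    by (auto simp: space_PiM PiE_UNIV_domain)
  moreover have "?B \<in> sets ?M2"
    by (rule sets_PiM_pmf_cylinder) simp
  moreover have "measure ?M2 ?B = measure_pmf.prob \<theta> B"
    by (subst measure_PiM_pmf_cylinder) simp_all
  ultimately show ?thesis
    unfolding brw_space_def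
    by (simp add: measure_pair_measure_Times_prob prob_space_PiM prob_space_measure_pmf
        prob_space.prob_space)
qed

lemma zvec_add: "zvec (a + b) = zvec a + zvec b"
  by (simp add: zvec_def vec_eq_iff)

lemma zvec_sum: "zvec (sum f A) = (\<Sum>x\<in>A. zvec (f x))"
  by (induction A rule: infinite_finite_induct) (simp_all add: zvec_add, simp_all add: zvec_def vec_eq_iff)

lemma measurable_zvec_increment [measurable]:
  "(\<lambda>\<omega>. zvec (snd \<omega> v)) \<in> borel_measurable (brw_space L0 Kl p \<theta>)"
  using measurable_compose[OF measurable_increment, of zvec borel] by simp

lemma measurable_zvec_spine_pos [measurable]:
  "(\<lambda>\<omega>. zvec (spine_pos (snd \<omega>) i)) \<in> borel_measurable (brw_space L0 Kl p \<theta>)"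
  unfolding spine_pos_def zvec_sum by measurable

lemma measurable_zvec_node_pos [measurable]:
  "(\<lambda>\<omega>. zvec (node_pos (snd \<omega>) k j w)) \<in> borel_measurable (brw_space L0 Kl p \<theta>)"
  unfolding node_pos_def zvec_add zvec_sum by measurable

lemma nonempty_infdist_le_iff:
  "S \<noteq> {} \<and> infdist x S \<le> c \<longleftrightarrow> (\<forall>m::nat. \<exists>s\<in>S. dist x s < c + 1 / (real m + 1))"
proof
  assume S: "S \<noteq> {} \<and> infdist x S \<le> c"
  show "\<forall>m::nat. \<exists>s\<in>S. dist x s < c + 1 / (real m + 1)"
  proof
    fix m :: nat
    have "(INF s\<in>S. dist x s) < c + 1 / (real m + 1)"
      using S infdist_notempty[of S x] by (smt (verit) divide_pos_pos of_nat_0_le_iff)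
    then show "\<exists>s\<in>S. dist x s < c + 1 / (real m + 1)"
      by (subst (asm) cINF_less_iff) (auto intro: bdd_belowI[of _ 0] simp: S)
  qed
next
  assume approx: "\<forall>m::nat. \<exists>s\<in>S. dist x s < c + 1 / (real m + 1)"
  then have "S \<noteq> {}" by blast
  moreover have "infdist x S \<le> c + e" if "e > 0" for e
  proof -
    obtain m :: nat where m: "inverse (real (Suc m)) < e"
      using reals_Archimedean \<open>e > 0\<close> by blast
    obtain s where "s \<in> S" "dist x s < c + 1 / (real m + 1)"
      using approx by blast
    then show ?thesis
      using infdist_le[of s S x] m by (simp add: inverse_eq_divide add.commute)
  qed
  then have "infdist x S \<le> c"
    by (rule field_le_epsilon)
  ultimately show "S \<noteq> {} \<and> infdist x S \<le> c" by blast
qed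

lemma sets_in_subtree [measurable]:
  "{\<omega>. in_subtree (fst \<omega>) k j w} \<in> sets (brw_space L0 Kl p \<theta>)"
proof -
  have "{\<omega> \<in> space (brw_space L0 Kl p \<theta>).
      j < fst \<omega> (Inl k) \<and> (\<forall>m\<in>{..<length w}. w ! m < fst \<omega> (Inr (k, j, take m w)))}
    \<in> sets (brw_space L0 Kl p \<theta>)"
    by measurable
  then show ?thesis
    by (simp add: in_subtree_def Ball_def)
qed

lemma sets_good_event: "good_event n \<epsilon> q \<in> sets (brw_space L0 Kl p \<theta>)"
proof -
  define c where "c = real n powr (1 / q + \<epsilon>)"
  define near where "near i m k j w = {\<omega>. in_subtree (fst \<omega>) k j w} \<inter>
    {\<omega> \<in> space (brw_space L0 Kl p \<theta>).
      dist (zvec (spine_pos (snd \<omega>) i)) (zvec (node_pos (snd \<omega>) k j w)) < c + 1 / (real m + 1)}"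
    for i m k j w
  have "good_event n \<epsilon> q = {\<omega>. \<forall>i\<le>n. U_pos \<omega> n \<noteq> {} \<and>
      infdist (zvec (spine_pos (snd \<omega>) i)) (zvec ` U_pos \<omega> n) \<le> c}"
    unfolding good_event_def c_def by auto
  also have "\<dots> = {\<omega>. \<forall>i\<le>n. \<forall>m::nat. \<exists>s\<in>zvec ` U_pos \<omega> n.
      dist (zvec (spine_pos (snd \<omega>) i)) s < c + 1 / (real m + 1)}"
    by (subst nonempty_infdist_le_iff[symmetric]) auto
  also have "\<dots> = (\<Inter>i\<in>{..n}. \<Inter>m. \<Union>k\<in>{..n}. \<Union>j. \<Union>w. near i m k j w)"
    unfolding U_pos_def near_def by (auto; blast)
  also have "\<dots> \<in> sets (brw_space L0 Kl p \<theta>)"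
    unfolding near_def by measurable
  finally show ?thesis .
qed

type_synonym 'd brw_outcome = "(idx \<Rightarrow> nat) \<times> (idx \<Rightarrow> int ^ 'd)"

definition barren_window :: "nat \<Rightarrow> nat \<Rightarrow> 'd brw_outcome set" where
  "barren_window a L = {\<omega>. \<forall>k\<in>{a..a + L}. fst \<omega> (Inl k) = 0}"

definition large_increment :: "real \<Rightarrow> idx \<Rightarrow> ('d::finite) brw_outcome set" where
  "large_increment r v = {\<omega>. r \<le> norm (zvec (snd \<omega> v))}"

text \<open>The windows start at \<open>min i (n - L)\<close> so that they stay inside \<open>{0..n}\<close>; the extra child
  \<open>Inr (k, 0, [])\<close> of a non-barren spine vertex \<open>k\<close> is the witness in \<open>U\<^sub>n\<close>.\<close>

definition bad_event :: "nat \<Rightarrow> nat \<Rightarrow> real \<Rightarrow> ('d::finite) brw_outcome set" where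
  "bad_event n L r = (\<Union>i\<le>n. barren_window (min i (n - L)) L)
     \<union> (\<Union>k<n. large_increment r (Inl k)) \<union> (\<Union>k\<le>n. large_increment r (Inr (k, 0, [])))"

lemma norm_spine_pos_diff_le:
  assumes "a \<le> b" and "\<forall>k\<in>{a..<b}. norm (zvec (Y (Inl k))) \<le> r"
  shows "norm (zvec (spine_pos Y b) - zvec (spine_pos Y a)) \<le> real (b - a) * r"
proof -
  have "zvec (spine_pos Y b) - zvec (spine_pos Y a) = (\<Sum>k\<in>{a..<b}. zvec (Y (Inl k)))"
    using \<open>a \<le> b\<close> unfolding spine_pos_def zvec_sum lessThan_atLeast0
    by (metis add_diff_cancel_left' le0 sum.atLeastLessThan_concat)
  also have "norm \<dots> \<le> (\<Sum>k\<in>{a..<b}. r)"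
    using assms(2) by (intro sum_norm_le) auto
  finally show ?thesis by simp
qed

lemma dist_spine_pos_le:
  assumes "\<forall>k<n. norm (zvec (Y (Inl k))) \<le> r" and "i \<le> n" "k \<le> n"
  shows "dist (zvec (spine_pos Y i)) (zvec (spine_pos Y k)) \<le> real (max i k - min i k) * r"
proof (cases "i \<le> k")
  case True
  then show ?thesis
    using norm_spine_pos_diff_le[of i k Y r] assms by (simp add: dist_norm norm_minus_commute)
next
  case False
  then show ?thesis
    using norm_spine_pos_diff_le[of k i Y r] assms by (simp add: dist_norm)
qed

lemma good_event_if_not_bad_event:
  assumes "L \<le> n" and "(real L + 1) * r \<le> real n powr (1 / q + \<epsilon>)"
    and "\<omega> \<notin> bad_event n L r"
  shows "\<omega> \<in> good_event n \<epsilon> q"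
proof -
  let ?Y = "snd \<omega>"
  have spine: "\<forall>k<n. norm (zvec (?Y (Inl k))) \<le> r"
    using assms(3) unfolding bad_event_def large_increment_def by fastforce
  have first_child: "norm (zvec (?Y (Inr (k, 0, [])))) \<le> r" if "k \<le> n" for k
    using assms(3) that unfolding bad_event_def large_increment_def by fastforce
  have window: "\<exists>k\<in>{min i (n - L)..min i (n - L) + L}. fst \<omega> (Inl k) \<noteq> 0" if "i \<le> n" for i
    using assms(3) that unfolding bad_event_def barren_window_def by blast
  have "r \<ge> 0"
    using first_child[of 0] norm_ge_zero order_trans by blast
  have close: "\<exists>s\<in>U_pos \<omega> n. dist (zvec (spine_pos ?Y i)) (zvec s) \<le> real n powr (1 / q + \<epsilon>)"
    if "i \<le> n" for i
  proof -
    obtain k where k: "k \<in> {min i (n - L)..min i (n - L) + L}" "fst \<omega> (Inl k) \<noteq> 0"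
      using window \<open>i \<le> n\<close> by blast
    have "k \<le> n" "max i k - min i k \<le> L"
      using k(1) \<open>i \<le> n\<close> \<open>L \<le> n\<close> by auto
    have witness: "node_pos ?Y k 0 [] \<in> U_pos \<omega> n"
      using \<open>k \<le> n\<close> k(2) unfolding U_pos_def in_subtree_def by force
    have "dist (zvec (spine_pos ?Y i)) (zvec (node_pos ?Y k 0 []))
        = norm ((zvec (spine_pos ?Y i) - zvec (spine_pos ?Y k)) - zvec (?Y (Inr (k, 0, []))))"
      by (simp add: node_pos_def zvec_add dist_norm algebra_simps)
    also have "\<dots> \<le> dist (zvec (spine_pos ?Y i)) (zvec (spine_pos ?Y k)) + norm (zvec (?Y (Inr (k, 0, []))))"
      unfolding dist_norm by (rule norm_triangle_ineq4)
    also have "\<dots> \<le> real L * r + r"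
      using dist_spine_pos_le[OF spine \<open>i \<le> n\<close> \<open>k \<le> n\<close>] \<open>max i k - min i k \<le> L\<close> \<open>r \<ge> 0\<close>
        first_child[OF \<open>k \<le> n\<close>]
      by (meson add_mono mult_right_mono of_nat_mono order_trans)
    also have "\<dots> \<le> real n powr (1 / q + \<epsilon>)"
      using assms(2) by (simp add: algebra_simps)
    finally show ?thesis
      using witness by blast
  qed
  have "U_pos \<omega> n \<noteq> {}"
    using close[of 0] by auto
  moreover have "infdist (zvec (spine_pos ?Y i)) (zvec ` U_pos \<omega> n) \<le> real n powr (1 / q + \<epsilon>)"
    if "i \<le> n" for i
    using close[OF that] by (auto intro: infdist_le2)
  ultimately show ?thesis
    unfolding good_event_def by blast
qed

lemma sets_barren_window [measurable]: "barren_window a L \<in> sets (brw_space L0 Kl p \<theta>)"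
proof -
  have "{\<omega> \<in> space (brw_space L0 Kl p \<theta>). \<forall>k\<in>{a..a + L}. fst \<omega> (Inl k) = 0} \<in> sets (brw_space L0 Kl p \<theta>)"
    by measurable
  then show ?thesis by (simp add: barren_window_def)
qed

lemma sets_large_increment [measurable]: "large_increment r v \<in> sets (brw_space L0 Kl p \<theta>)"
proof -
  have "{\<omega> \<in> space (brw_space L0 Kl p \<theta>). r \<le> norm (zvec (snd \<omega> v))} \<in> sets (brw_space L0 Kl p \<theta>)"
    by measurable
  then show ?thesis by (simp add: large_increment_def)
qed

lemma measure_barren_window_le:
  assumes "\<forall>k. pmf (offspring_law L0 Kl p (Inl k)) 0 \<le> b"
  shows "measure (brw_space L0 Kl p \<theta>) (barren_window a L) \<le> b ^ (L + 1)"
proof -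
  have window: "barren_window a L = {\<omega>. \<forall>j\<in>Inl ` {a..a + L}. fst \<omega> j \<in> {0}}"
    by (auto simp: barren_window_def)
  have "measure (brw_space L0 Kl p \<theta>) (barren_window a L)
      = (\<Prod>j\<in>Inl ` {a..a + L}. measure_pmf.prob (offspring_law L0 Kl p j) {0})"
    unfolding window by (rule measure_brw_space_offspring) simp
  also have "\<dots> = (\<Prod>k\<in>{a..a + L}. pmf (offspring_law L0 Kl p (Inl k)) 0)"
    by (simp add: prod.reindex measure_pmf_single)
  also have "\<dots> \<le> (\<Prod>k\<in>{a..a + L}. b)"
    using assms by (intro prod_mono) auto
  finally show ?thesis by simp
qed

lemma measure_large_increment_le:
  fixes \<theta> :: "(int ^ 'd) pmf"
  assumes "integrable (measure_pmf \<theta>) (\<lambda>x. norm (zvec x) powr q)" and "q > 0" "r > 0"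
  shows "measure (brw_space L0 Kl p \<theta>) (large_increment r v)
       \<le> measure_pmf.expectation \<theta> (\<lambda>x. norm (zvec x) powr q) / r powr q"
proof -
  have "measure (brw_space L0 Kl p \<theta>) (large_increment r v) = measure_pmf.prob \<theta> {x. r \<le> norm (zvec x)}"
    unfolding large_increment_def
    using measure_brw_space_increment[of L0 Kl p \<theta> v "{x. r \<le> norm (zvec x)}"] by simp
  also have "\<dots> \<le> measure_pmf.prob \<theta> {x \<in> space (measure_pmf \<theta>). r powr q \<le> norm (zvec x) powr q}"
    using assms by (intro measure_pmf.finite_measure_mono) (auto intro: powr_mono2)
  also have "\<dots> \<le> measure_pmf.expectation \<theta> (\<lambda>x. norm (zvec x) powr q) / r powr q"
    using assms by (intro integral_Markov_inequality_measure) auto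
  finally show ?thesis .
qed

lemma measure_bad_event_le:
  fixes \<theta> :: "(int ^ 'd) pmf"
  assumes "\<forall>k. pmf (offspring_law L0 Kl p (Inl k)) 0 \<le> b"
    and "integrable (measure_pmf \<theta>) (\<lambda>x. norm (zvec x) powr q)" and "q > 0" "r > 0"
  shows "measure (brw_space L0 Kl p \<theta>) (bad_event n L r)
       \<le> (real n + 1) * b ^ (L + 1)
         + (2 * real n + 1) * (measure_pmf.expectation \<theta> (\<lambda>x. norm (zvec x) powr q) / r powr q)"
proof -
  interpret prob_space "brw_space L0 Kl p \<theta>"
    by (rule prob_space_brw_space)
  define E where "E = measure_pmf.expectation \<theta> (\<lambda>x. norm (zvec x) powr q) / r powr q"
  let ?W = "\<Union>i\<le>n. barren_window (min i (n - L)) L"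
  let ?S = "\<Union>k<n. large_increment r (Inl k)"
  let ?F = "\<Union>k\<le>n. large_increment r (Inr (k, 0, []))"
  have "?W \<in> events" "?S \<in> events" "?F \<in> events"
    by measurable
  then have "prob (bad_event n L r) \<le> prob ?W + prob ?S + prob ?F"
    unfolding bad_event_def
    by (intro order_trans[OF measure_subadditive] add_right_mono measure_subadditive)
      (simp_all add: emeasure_finite)
  also have "\<dots> \<le> (\<Sum>i\<le>n. prob (barren_window (min i (n - L)) L))
      + (\<Sum>k<n. prob (large_increment r (Inl k))) + (\<Sum>k\<le>n. prob (large_increment r (Inr (k, 0, []))))"
    by (intro add_mono finite_measure_subadditive_finite) auto
  also have "\<dots> \<le> (\<Sum>i\<le>n. b ^ (L + 1)) + (\<Sum>k<n. E) + (\<Sum>k\<le>n. E)"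
    unfolding E_def using assms
    by (intro add_mono sum_mono measure_barren_window_le measure_large_increment_le) auto
  also have "\<dots> = (real n + 1) * b ^ (L + 1) + (2 * real n + 1) * E"
    by (simp add: algebra_simps)
  finally show ?thesis
    unfolding E_def .
qed

lemma measure_good_event_ge:
  fixes \<theta> :: "(int ^ 'd) pmf"
  assumes "\<forall>k. pmf (offspring_law L0 Kl p (Inl k)) 0 \<le> b"
    and "integrable (measure_pmf \<theta>) (\<lambda>x. norm (zvec x) powr q)" and "q > 0" "r > 0"
    and "L \<le> n" and "(real L + 1) * r \<le> real n powr (1 / q + \<epsilon>)"
  shows "1 - (real n + 1) * b ^ (L + 1)
           - (2 * real n + 1) * (measure_pmf.expectation \<theta> (\<lambda>x. norm (zvec x) powr q) / r powr q)
       \<le> measure (brw_space L0 Kl p \<theta>) (good_event n \<epsilon> q)"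
proof -
  interpret prob_space "brw_space L0 Kl p \<theta>"
    by (rule prob_space_brw_space)
  have "space (brw_space L0 Kl p \<theta>) - bad_event n L r \<subseteq> good_event n \<epsilon> q"
    using good_event_if_not_bad_event[OF assms(5,6)] by blast
  then have "prob (space (brw_space L0 Kl p \<theta>) - bad_event n L r) \<le> prob (good_event n \<epsilon> q)"
    by (intro finite_measure_mono sets_good_event)
  moreover have "prob (space (brw_space L0 Kl p \<theta>) - bad_event n L r) = 1 - prob (bad_event n L r)"
    by (intro prob_compl) (simp add: bad_event_def)
  ultimately show ?thesis
    using measure_bad_event_le[OF assms(1-4), of n L] by linarith
qed

text \<open>The parameters are \<open>L + 1 \<approx> n\<^sup>\<delta>\<close> and \<open>r = n\<^bsup>1/q + \<delta>\<^esup>\<close> with \<open>2\<delta> \<le> \<epsilon>\<close>.\<close>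

lemma tendsto_1_if_window_bound:
  fixes g :: "nat \<Rightarrow> real"
  assumes "0 < b" "b < 1" "q > 0" "\<epsilon> > 0" and "\<And>n. g n \<le> 1"
    and bound: "\<And>n L r. L \<le> n \<Longrightarrow> r > 0 \<Longrightarrow> (real L + 1) * r \<le> real n powr (1 / q + \<epsilon>) \<Longrightarrow>
      1 - (real n + 1) * b ^ (L + 1) - (2 * real n + 1) * (C / r powr q) \<le> g n"
  shows "g \<longlonglongrightarrow> 1"
proof -
  define a where "a = - ln b"
  define \<delta> where "\<delta> = min \<epsilon> 1 / 2"
  define f where "f n = (real n + 1) * exp (- a * (real n powr \<delta> - 1))
      + (2 * real n + 1) * C / real n powr (1 + \<delta> * q)" for n :: nat
  have "a > 0" "\<delta> > 0" "\<delta> \<le> 1" "2 * \<delta> \<le> \<epsilon>"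
    using assms by (auto simp: a_def \<delta>_def)
  have "f \<longlonglongrightarrow> 0"
    unfolding f_def using \<open>a > 0\<close> \<open>\<delta> > 0\<close> \<open>q > 0\<close> by real_asymp
  then have lower_lim: "(\<lambda>n. 1 - f n) \<longlonglongrightarrow> 1"
    using tendsto_diff[OF tendsto_const] by fastforce
  have lower: "1 - f n \<le> g n" if "n \<ge> 1" for n
  proof -
    define L where "L = nat \<lfloor>real n powr \<delta>\<rfloor> - 1"
    define r where "r = real n powr (1 / q + \<delta>)"
    have "1 \<le> real n powr \<delta>" "real n powr \<delta> \<le> real n"
      using that \<open>\<delta> > 0\<close> \<open>\<delta> \<le> 1\<close> powr_mono[of \<delta> 1 "real n"] by (auto simp: ge_one_powr_ge_zero)
    then have L: "real n powr \<delta> - 1 \<le> real L + 1" "real L + 1 \<le> real n powr \<delta>"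
      unfolding L_def by (auto simp: of_nat_diff le_nat_floor)
    then have "L \<le> n"
      using \<open>real n powr \<delta> \<le> real n\<close> by linarith
    have "r > 0"
      using that by (simp add: r_def)
    have "(real L + 1) * r \<le> real n powr \<delta> * r"
      using L(2) \<open>r > 0\<close> by (intro mult_right_mono) auto
    also have "\<dots> = real n powr (1 / q + 2 * \<delta>)"
      unfolding r_def by (simp add: powr_add[symmetric] algebra_simps)
    also have "\<dots> \<le> real n powr (1 / q + \<epsilon>)"
      using that \<open>2 * \<delta> \<le> \<epsilon>\<close> by (intro powr_mono) auto
    finally have window: "(real L + 1) * r \<le> real n powr (1 / q + \<epsilon>)" .
    have "b ^ (L + 1) = exp (real (L + 1) * ln b)"
      using \<open>0 < b\<close> by (subst exp_of_nat_mult) simp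
    also have "\<dots> = exp (- a * (real L + 1))"
      by (simp add: a_def mult.commute)
    also have "\<dots> \<le> exp (- a * (real n powr \<delta> - 1))"
      using L(1) \<open>a > 0\<close> by simp
    finally have "(real n + 1) * b ^ (L + 1) \<le> (real n + 1) * exp (- a * (real n powr \<delta> - 1))"
      by (intro mult_left_mono) auto
    moreover have "r powr q = real n powr (1 + \<delta> * q)"
      unfolding r_def using \<open>q > 0\<close> by (simp add: powr_powr algebra_simps)
    then have "(2 * real n + 1) * (C / r powr q) = (2 * real n + 1) * C / real n powr (1 + \<delta> * q)"
      by simp
    moreover have "1 - (real n + 1) * b ^ (L + 1) - (2 * real n + 1) * (C / r powr q) \<le> g n"
      using bound \<open>L \<le> n\<close> \<open>r > 0\<close> window by blast
    ultimately show ?thesis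
      unfolding f_def by linarith
  qed
  show ?thesis
  proof (rule tendsto_sandwich[where h = "\<lambda>_. 1"])
    show "eventually (\<lambda>n. 1 - f n \<le> g n) sequentially"
      using lower by (rule eventually_sequentiallyI)
  qed (use lower_lim assms(5) in auto)
qed

lemma good_event_tendsto_1:
  fixes \<theta> :: "(int ^ 'd) pmf"
  assumes b: "\<forall>k. pmf (offspring_law L0 Kl p (Inl k)) 0 \<le> b" and "0 < b" "b < 1"
    and mom: "integrable (measure_pmf \<theta>) (\<lambda>x. norm (zvec x) powr q)" and "q > 0" "\<epsilon> > 0"
  shows "(\<lambda>n. measure (brw_space L0 Kl p \<theta>) (good_event n \<epsilon> q)) \<longlonglongrightarrow> 1"
proof (rule tendsto_1_if_window_bound)
  show "measure (brw_space L0 Kl p \<theta>) (good_event n \<epsilon> q) \<le> 1" for n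
    using prob_space.prob_le_1[OF prob_space_brw_space] .
  show "1 - (real n + 1) * b ^ (L + 1)
      - (2 * real n + 1) * (measure_pmf.expectation \<theta> (\<lambda>x. norm (zvec x) powr q) / r powr q)
      \<le> measure (brw_space L0 Kl p \<theta>) (good_event n \<epsilon> q)"
    if "L \<le> n" "r > 0" "(real L + 1) * r \<le> real n powr (1 / q + \<epsilon>)" for n L r
    using measure_good_event_ge[OF b mom \<open>q > 0\<close> \<open>r > 0\<close> that(1,3)] .
qed (use assms in auto)

lemma pmf_zero_pos_if_critical_nondegenerate:
  assumes "measure_pmf.expectation p real = 1"
    and "measure_pmf.expectation p (\<lambda>i. real i ^ 2) - 1 > 0"
  shows "pmf p 0 > 0"
proof (rule ccontr)
  assume "\<not> pmf p 0 > 0"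
  then have "AE i in measure_pmf p. 1 \<le> i"
    by (auto simp: AE_measure_pmf_iff set_pmf_iff Suc_le_eq intro: gr0I)
  moreover have "integrable (measure_pmf p) real"
    using assms(1) not_integrable_integral_eq[of "measure_pmf p" real] by fastforce
  ultimately have "AE i in measure_pmf p. real i - 1 = 0"
    using assms(1) by (subst integral_nonneg_eq_0_iff_AE[symmetric]) (auto elim!: eventually_mono)
  then have "AE i in measure_pmf p. real i ^ 2 = 1"
    by eventually_elim simp
  then have "measure_pmf.expectation p (\<lambda>i. real i ^ 2) = measure_pmf.expectation p (\<lambda>_. 1)"
    by (intro integral_cong_AE) auto
  with assms(2) show False by simp
qed

lemma pmf_zero_lt_1_if_mean_1:
  assumes "measure_pmf.expectation p real = 1"
  shows "pmf p 0 < 1"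
proof (rule ccontr)
  assume "\<not> pmf p 0 < 1"
  then have "AE i in measure_pmf p. real i = 0"
    using pmf_le_1[of p 0] measure_pmf.prob_eq_1[of "{0}" p]
    by (auto simp: measure_pmf_single elim!: eventually_mono)
  then have "measure_pmf.expectation p real = measure_pmf.expectation p (\<lambda>_. 0)"
    by (intro integral_cong_AE) auto
  with assms show False by simp
qed

lemma pmf_zero_if_tail:
  assumes "\<forall>j. pmf Kl j = measure_pmf.prob p {Suc j..}"
  shows "pmf Kl 0 = 1 - pmf p 0"
proof -
  have "{Suc 0..} = space (measure_pmf p) - {0}" by auto
  then show ?thesis
    using assms measure_pmf.prob_compl[of "{0}" p] by (simp add: measure_pmf_single)
qed

theorem mainTheorem10:
  fixes \<theta> :: "(int ^ 'd) pmf" and p Kl :: "nat pmf" and q \<epsilon> :: real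
  assumes sym: "\<forall>x. pmf \<theta> (- x) = pmf \<theta> x"
    and gen: "\<forall>H. (0 \<in> H \<and> (\<forall>x\<in>H. \<forall>y\<in>H. x - y \<in> H) \<and> set_pmf \<theta> \<subseteq> H) \<longrightarrow> H = UNIV"
    and q: "q > 4"
    and mom: "integrable (measure_pmf \<theta>) (\<lambda>x. norm (zvec x) powr q)"
    and p2: "integrable (measure_pmf p) (\<lambda>i. real i ^ 2)"
    and mean: "measure_pmf.expectation p real = 1"
    and var: "measure_pmf.expectation p (\<lambda>i. real i ^ 2) - 1 > 0"
    and Kl: "\<forall>j. pmf Kl j = measure_pmf.prob p {Suc j..}"
    and eps: "\<epsilon> > 0"
  shows "(\<lambda>n. measure (brw_space Kl Kl p \<theta>) (good_event n \<epsilon> q)) \<longlonglongrightarrow> 1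
       \<and> (\<lambda>n. measure (brw_space p Kl p \<theta>) (good_event n \<epsilon> q)) \<longlonglongrightarrow> 1"
proof
  \<comment> \<open>Of the hypotheses only \<open>0 < p\<^sub>0 < 1\<close>, \<open>q > 0\<close> and the moment bound enter.\<close>
  have "0 < pmf p 0" "pmf p 0 < 1"
    using pmf_zero_pos_if_critical_nondegenerate[OF mean var] pmf_zero_lt_1_if_mean_1[OF mean] .
  moreover have "pmf Kl 0 = 1 - pmf p 0"
    using Kl by (rule pmf_zero_if_tail)
  moreover have "q > 0"
    using q by simp
  ultimately show "(\<lambda>n. measure (brw_space Kl Kl p \<theta>) (good_event n \<epsilon> q)) \<longlonglongrightarrow> 1"
    and "(\<lambda>n. measure (brw_space p Kl p \<theta>) (good_event n \<epsilon> q)) \<longlonglongrightarrow> 1"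
    using eps mom
    by (auto intro!: good_event_tendsto_1[where b = "pmf Kl 0"]
        good_event_tendsto_1[where b = "max (pmf p 0) (pmf Kl 0)"] simp: offspring_law_def)
qed

end
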